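(* Let $s\ge2$ and let $\mathcal{C}$ be an $[n,k,d]_q$ linear code with multiple $(r_i,\delta_i)_{i\in[s]}$ localities with respect to a partition $\mathcal{T}_1,\dots,\mathcal{T}_s$ of $[n]$, $n_i=|\mathcal{T}_i|$, $r_1\le\dots\le r_s$, $\delta_1\ge\dots\ge\delta_s\ge2$. Let $\Delta_0=0$ and $\Delta_j=\sum_{i=1}^{j}\lceil n_i/(r_i+\delta_i-1)\rceil(\delta_i-1)$ for $j=1,\dots,s-1$. Suppose $\sum_{i=1}^{s-1}r_i\lceil n_i/(r_i+\delta_i-1)\rceil\le k-1$ and, for each $j=1,\dots,s-1$, $$r_j\left\lceil\frac{\Delta_j-\Delta_{j-1}-1}{\delta_j-1}\right\rceil+(\Delta_j-\Delta_{j-1}-1)<n_j.$$ Then $$d\le n-k+1-\sum_{i=1}^{s-1}\left\lceil\frac{n_i}{r_i+\delta_i-1}\right\rceil(\delta_i-1)-\left(\left\lceil\frac{k-\sum_{i=1}^{s-1}r_i\lceil n_i/(r_i+\delta_i-1)\rceil}{r_s}\right\rceil-1\right)(\delta_s-1).$$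
   Context: $[n]=\{1,\dots,n\}$. For an $[n,k,d]_q$ linear code with generator matrix columns $\vec g_1,\dots,\vec g_n$, a regenerating set of coordinate $i$ is a (minimal) subset $R\subseteq[n]$ with $i\in R$ such that $\vec g_i$ is an $\mathbb{F}_q$-linear combination of $\{\vec g_j\}_{j\in R\setminus\{i\}}$ and no proper subset of $R\setminus\{i\}$ suffices; $\mathcal{R}_i$ is the set of regenerating sets of coordinate $i$. Multiple $(r_i,\delta_i)_{i\in[s]}$ localities: $\mathcal{T}_1,\dots,\mathcal{T}_s$ is a partition of $[n]$, $r_1\le\dots\le r_s$ and $\delta_1\ge\dots\ge\delta_s\ge2$ are integers, and for each $i\in[s]$ and each $\iota\in\mathcal{T}_i$ there is $S_\iota\subseteq\mathcal{T}_i$ with $\iota\in S_\iota$, $\delta_i\le|S_\iota|\le r_i+\delta_i-1$, such that for every $E\subseteq S_\iota$ with $|E|=\delta_i-1$ and every $j\in E$, $(S_\iota\setminus E)\cup\{j\}\in\mathcal{R}_j$. *)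

theory Defs
  imports Complex_Main
begin

text \<open>An [n,k]_q linear code is given by a k x n generator matrix over a finite field 'a.
  Column i (for i in {1..n}) is the vector g i, whose entries are g i t for t < k.
  The codewords are the vectors (m * G)_i = sum_{t<k} m t * g i t, i in {1..n}.\<close>

definition gen_full_rank :: "nat \<Rightarrow> nat \<Rightarrow> (nat \<Rightarrow> nat \<Rightarrow> 'a::field) \<Rightarrow> bool" where
  "gen_full_rank n k g \<longleftrightarrow>
     (\<forall>m::nat \<Rightarrow> 'a. (\<forall>i\<in>{1..n}. (\<Sum>t<k. m t * g i t) = 0) \<longrightarrow> (\<forall>t<k. m t = 0))"

definition min_dist :: "nat \<Rightarrow> nat \<Rightarrow> (nat \<Rightarrow> nat \<Rightarrow> 'a::field) \<Rightarrow> nat" where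
  "min_dist n k g = Min {card {i\<in>{1..n}. (\<Sum>t<k. m t * g i t) \<noteq> 0} | m.
                         \<exists>i\<in>{1..n}. (\<Sum>t<k. m t * g i t) \<noteq> 0}"

definition in_col_span :: "nat \<Rightarrow> (nat \<Rightarrow> nat \<Rightarrow> 'a::field) \<Rightarrow> nat set \<Rightarrow> nat \<Rightarrow> bool" where
  "in_col_span k g S i \<longleftrightarrow> (\<exists>c. \<forall>t<k. g i t = (\<Sum>j\<in>S. c j * g j t))"

definition regenerating :: "nat \<Rightarrow> nat \<Rightarrow> (nat \<Rightarrow> nat \<Rightarrow> 'a::field) \<Rightarrow> nat \<Rightarrow> nat set \<Rightarrow> bool" where
  "regenerating n k g i R \<longleftrightarrow>
     R \<subseteq> {1..n} \<and> i \<in> R \<and> in_col_span k g (R - {i}) i \<and>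
     (\<forall>R'. R' \<subset> R - {i} \<longrightarrow> \<not> in_col_span k g R' i)"

definition is_partition :: "nat \<Rightarrow> nat \<Rightarrow> (nat \<Rightarrow> nat set) \<Rightarrow> bool" where
  "is_partition n s T \<longleftrightarrow>
     (\<Union>i\<in>{1..s}. T i) = {1..n} \<and> (\<forall>i\<in>{1..s}. T i \<noteq> {}) \<and>
     (\<forall>i\<in>{1..s}. \<forall>j\<in>{1..s}. i \<noteq> j \<longrightarrow> T i \<inter> T j = {})"

definition multiple_localities ::
  "nat \<Rightarrow> nat \<Rightarrow> (nat \<Rightarrow> nat \<Rightarrow> 'a::field) \<Rightarrow> nat \<Rightarrow> (nat \<Rightarrow> nat set) \<Rightarrow> (nat \<Rightarrow> nat) \<Rightarrow> (nat \<Rightarrow> nat) \<Rightarrow> bool" where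
  "multiple_localities n k g s T r \<delta> \<longleftrightarrow>
     is_partition n s T \<and>
     (\<forall>i j. 1 \<le> i \<longrightarrow> i \<le> j \<longrightarrow> j \<le> s \<longrightarrow> r i \<le> r j \<and> \<delta> j \<le> \<delta> i) \<and>
     \<delta> s \<ge> 2 \<and>
     (\<forall>i\<in>{1..s}. \<forall>\<iota>\<in>T i. \<exists>S. S \<subseteq> T i \<and> \<iota> \<in> S \<and> \<delta> i \<le> card S \<and> card S \<le> r i + \<delta> i - 1 \<and>
        (\<forall>E. E \<subseteq> S \<longrightarrow> card E = \<delta> i - 1 \<longrightarrow>
           (\<forall>j\<in>E. regenerating n k g j ((S - E) \<union> {j}))))"

definition Delta :: "(nat \<Rightarrow> nat set) \<Rightarrow> (nat \<Rightarrow> nat) \<Rightarrow> (nat \<Rightarrow> nat) \<Rightarrow> nat \<Rightarrow> int" where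
  "Delta T r \<delta> j = (\<Sum>i=1..j. \<lceil>real (card (T i)) / real (r i + \<delta> i - 1)\<rceil> * (int (\<delta> i) - 1))"

end

theory Submission
  imports Defs
begin

text \<open>Grow a set \<open>X\<close> of coordinates together with a set \<open>B \<subseteq> X\<close> whose columns span all columns
  of \<open>X\<close>, so that \<open>|B|\<close> bounds the rank of \<open>X\<close>. Adding a local repair group \<open>S\<close> that meets the
  complement of \<open>X\<close> enlarges \<open>X\<close> by \<open>|S - X|\<close>, while \<open>B\<close> has to grow only by
  \<open>max 0 (|S - X| - (\<delta> - 1)) \<le> r\<close>, because any \<open>\<delta> - 1\<close> coordinates of \<open>S\<close> are recovered from
  the others. So each step raises the excess \<open>|X| - |B|\<close> by at least 1, and by at least
  \<open>\<delta> - 1\<close> whenever \<open>|B|\<close> grows. Running this greedily inside each of \<open>T\<^sub>1, \<dots>, T\<^bsub>s-1\<^esub>\<close>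
  (the hypothesis on \<open>\<Delta>\<^sub>j\<close> guarantees that \<open>T\<^sub>j\<close> is not exhausted before the excess gained
  there reaches \<open>\<lceil>n\<^sub>j / (r\<^sub>j + \<delta>\<^sub>j - 1)\<rceil> (\<delta>\<^sub>j - 1)\<close>), and then anywhere while \<open>|B| < k\<close>,
  produces \<open>X\<close> and \<open>B\<close> with \<open>|B| < k\<close> and an excess at least the subtracted terms of
  the bound. Padding with fresh coordinates up to rank \<open>k - 1\<close>, some nonzero codeword vanishes
  on \<open>X\<close>, hence \<open>d \<le> n - |X|\<close>.\<close>

lemma in_col_span_self:
  assumes "j \<in> B" "finite B"
  shows "in_col_span k g B j"
  unfolding in_col_span_def
proof (intro exI allI impI)
  fix t
  have "(\<Sum>b\<in>B. (if b = j then 1 else 0) * g b t) = (\<Sum>b\<in>B. if b = j then g b t else 0)"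
    by (rule sum.cong) auto
  then show "g j t = (\<Sum>b\<in>B. (if b = j then 1 else 0) * g b t)"
    using assms by simp
qed

lemma in_col_span_mono:
  assumes "in_col_span k g B j" "B \<subseteq> B'" "finite B'"
  shows "in_col_span k g B' j"
proof -
  obtain c where c: "\<forall>t<k. g j t = (\<Sum>b\<in>B. c b * g b t)"
    using assms(1) unfolding in_col_span_def by blast
  have "(\<Sum>b\<in>B'. (if b \<in> B then c b else 0) * g b t) = (\<Sum>b\<in>B. c b * g b t)" for t
    by (rule sum.mono_neutral_cong_right[OF assms(3) assms(2)]) auto
  with c show ?thesis
    unfolding in_col_span_def by (intro exI[of _ "\<lambda>b. if b \<in> B then c b else 0"]) simp
qed

lemma in_col_span_trans:
  assumes "finite B" "in_col_span k g S i" "\<forall>j\<in>S. in_col_span k g B j"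
  shows "in_col_span k g B i"
proof -
  obtain c where c: "\<forall>t<k. g i t = (\<Sum>j\<in>S. c j * g j t)"
    using assms(2) unfolding in_col_span_def by blast
  obtain D where D: "\<forall>j\<in>S. \<forall>t<k. g j t = (\<Sum>b\<in>B. D j b * g b t)"
    using assms(3) unfolding in_col_span_def by (rule bchoice[elim_format]) blast
  have "g i t = (\<Sum>b\<in>B. (\<Sum>j\<in>S. c j * D j b) * g b t)" if t: "t < k" for t
  proof -
    have "g i t = (\<Sum>j\<in>S. c j * g j t)"
      using c t by blast
    also have "\<dots> = (\<Sum>j\<in>S. c j * (\<Sum>b\<in>B. D j b * g b t))"
      by (rule sum.cong[OF refl]) (use D t in metis)
    also have "\<dots> = (\<Sum>j\<in>S. \<Sum>b\<in>B. c j * D j b * g b t)"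
      by (simp add: sum_distrib_left mult.assoc)
    also have "\<dots> = (\<Sum>b\<in>B. \<Sum>j\<in>S. c j * D j b * g b t)"
      by (rule sum.swap)
    also have "\<dots> = (\<Sum>b\<in>B. (\<Sum>j\<in>S. c j * D j b) * g b t)"
      by (simp add: sum_distrib_right)
    finally show ?thesis .
  qed
  then show ?thesis
    unfolding in_col_span_def by (intro exI[of _ "\<lambda>b. \<Sum>j\<in>S. c j * D j b"]) blast
qed

lemma in_col_span_orthogonal:
  assumes "\<forall>b\<in>B. (\<Sum>t<k. m t * g b t) = 0" "in_col_span k g B j"
  shows "(\<Sum>t<k. m t * g j t) = 0"
proof -
  obtain c where c: "\<forall>t<k. g j t = (\<Sum>b\<in>B. c b * g b t)"
    using assms(2) unfolding in_col_span_def by blast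
  have "(\<Sum>t<k. m t * g j t) = (\<Sum>t<k. m t * (\<Sum>b\<in>B. c b * g b t))"
    using c by (intro sum.cong) simp_all
  also have "\<dots> = (\<Sum>t<k. \<Sum>b\<in>B. c b * (m t * g b t))"
    by (simp add: sum_distrib_left mult.left_commute)
  also have "\<dots> = (\<Sum>b\<in>B. \<Sum>t<k. c b * (m t * g b t))"
    by (rule sum.swap)
  also have "\<dots> = (\<Sum>b\<in>B. c b * (\<Sum>t<k. m t * g b t))"
    by (simp add: sum_distrib_left)
  also have "\<dots> = 0"
    using assms(1) by simp
  finally show ?thesis .
qed

lemma exists_nonzero_orthogonal:
  fixes e :: "'b \<Rightarrow> nat \<Rightarrow> 'a::field"
  assumes "finite B" "card B < k"
  shows "\<exists>m. (\<exists>t<k. m t \<noteq> 0) \<and> (\<forall>b\<in>B. (\<Sum>t<k. m t * e b t) = 0)"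
  using assms
proof (induction k arbitrary: B e)
  case 0
  then show ?case by simp
next
  case (Suc k)
  show ?case
  proof (cases "\<forall>b\<in>B. e b k = 0")
    case True
    then show ?thesis
      by (intro exI[of _ "\<lambda>t. if t = k then 1 else 0"]) auto
  next
    case False
    then obtain b0 where b0: "b0 \<in> B" "e b0 k \<noteq> 0" by blast
    \<comment> \<open>Pivot on \<open>b0\<close>: solve the other equations on the first \<open>k\<close> coordinates after
      eliminating coordinate \<open>k\<close>, then choose the last coordinate to satisfy the equation of \<open>b0\<close>.\<close>
    define e' where "e' = (\<lambda>b t. e b t - (e b k / e b0 k) * e b0 t)"
    have "card (B - {b0}) < k"
      using card_Diff1_less[OF Suc.prems(1) b0(1)] Suc.prems(2) by linarith
    then obtain m' where m': "\<exists>t<k. m' t \<noteq> 0" "\<forall>b\<in>B - {b0}. (\<Sum>t<k. m' t * e' b t) = 0"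
      using Suc.IH[of "B - {b0}" e'] Suc.prems by auto
    define \<sigma> where "\<sigma> = (\<lambda>b. \<Sum>t<k. m' t * e b t)"
    define m where "m = (\<lambda>t. if t < k then m' t else - \<sigma> b0 / e b0 k)"
    have m_sum: "(\<Sum>t<Suc k. m t * e b t) = \<sigma> b + (- \<sigma> b0 / e b0 k) * e b k" for b
      by (simp add: m_def \<sigma>_def)
    have "\<forall>b\<in>B. (\<Sum>t<Suc k. m t * e b t) = 0"
    proof
      fix b assume b: "b \<in> B"
      show "(\<Sum>t<Suc k. m t * e b t) = 0"
      proof (cases "b = b0")
        case True
        then show ?thesis
          unfolding m_sum using b0 by simp
      next
        case False
        then have "(\<Sum>t<k. m' t * e' b t) = 0"
          using m' b by auto
        moreover have "(\<Sum>t<k. m' t * e' b t) = \<sigma> b - (e b k / e b0 k) * \<sigma> b0"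
          by (simp add: e'_def \<sigma>_def right_diff_distrib sum_subtractf sum_distrib_left mult.left_commute)
        ultimately have "\<sigma> b = (e b k / e b0 k) * \<sigma> b0"
          by simp
        then show ?thesis
          unfolding m_sum using b0 by (simp add: field_simps)
      qed
    qed
    moreover have "\<exists>t<Suc k. m t \<noteq> 0"
      using m' by (auto simp: m_def)
    ultimately show ?thesis by blast
  qed
qed

definition spans_cols :: "nat \<Rightarrow> nat \<Rightarrow> (nat \<Rightarrow> nat \<Rightarrow> 'a::field) \<Rightarrow> nat set \<Rightarrow> nat set \<Rightarrow> bool" where
  "spans_cols n k g B X \<longleftrightarrow> B \<subseteq> X \<and> X \<subseteq> {1..n} \<and> (\<forall>j\<in>X. in_col_span k g B j)"

lemma spans_cols_finite:
  assumes "spans_cols n k g B X"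
  shows "finite X" "finite B"
  using assms unfolding spans_cols_def by (meson finite_atLeastAtMost finite_subset)+

lemma spans_cols_empty: "spans_cols n k g {} {}"
  unfolding spans_cols_def by simp

lemma spans_cols_union:
  assumes "spans_cols n k g B X" "Y \<subseteq> {1..n}"
  shows "spans_cols n k g (B \<union> (Y - X)) (X \<union> Y)"
proof -
  have fin: "finite (B \<union> (Y - X))"
    using spans_cols_finite[OF assms(1)] assms(2) finite_subset by auto
  have "in_col_span k g (B \<union> (Y - X)) j" if "j \<in> X \<union> Y" for j
  proof (cases "j \<in> X")
    case True
    then show ?thesis
      using assms(1) fin in_col_span_mono[of k g B j] unfolding spans_cols_def by blast
  next
    case False
    with that have "j \<in> B \<union> (Y - X)"
      by blast
    then show ?thesis
      using fin by (rule in_col_span_self)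
  qed
  then show ?thesis
    using assms unfolding spans_cols_def by blast
qed

lemma spans_cols_adjoin:
  assumes "spans_cols n k g B X" "Y \<subseteq> {1..n}" "\<forall>j\<in>Y. in_col_span k g X j"
  shows "spans_cols n k g B (X \<union> Y)"
proof -
  have "in_col_span k g B j" if "j \<in> Y" for j
    using in_col_span_trans[of B k g X j] assms that spans_cols_finite(2)
    unfolding spans_cols_def by blast
  then show ?thesis
    using assms(1,2) unfolding spans_cols_def by blast
qed

lemma exists_codeword_vanishing:
  assumes "gen_full_rank n k g" "spans_cols n k g B X" "card B < k"
  obtains m where "\<exists>i\<in>{1..n}. (\<Sum>t<k. m t * g i t) \<noteq> 0" "\<forall>i\<in>X. (\<Sum>t<k. m t * g i t) = 0"
proof -
  obtain m where m: "\<exists>t<k. m t \<noteq> 0" "\<forall>b\<in>B. (\<Sum>t<k. m t * g b t) = 0"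
    using exists_nonzero_orthogonal[OF spans_cols_finite(2)[OF assms(2)] assms(3)] by blast
  have "\<forall>i\<in>X. (\<Sum>t<k. m t * g i t) = 0"
    using assms(2) m(2) in_col_span_orthogonal unfolding spans_cols_def by blast
  moreover have "\<exists>i\<in>{1..n}. (\<Sum>t<k. m t * g i t) \<noteq> 0"
    using assms(1) m(1) unfolding gen_full_rank_def by blast
  ultimately show thesis
    using that by blast
qed

lemma spans_cols_all_card:
  assumes "gen_full_rank n k g" "spans_cols n k g B {1..n}"
  shows "k \<le> card B"
  using exists_codeword_vanishing[OF assms] by (metis not_le)

lemma min_dist_le_complement:
  assumes "gen_full_rank n k g" "spans_cols n k g B X" "card B < k"
  shows "min_dist n k g + card X \<le> n"
proof -
  obtain m where m: "\<exists>i\<in>{1..n}. (\<Sum>t<k. m t * g i t) \<noteq> 0" "\<forall>i\<in>X. (\<Sum>t<k. m t * g i t) = 0"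
    using exists_codeword_vanishing[OF assms] .
  have X: "X \<subseteq> {1..n}"
    using assms(2) unfolding spans_cols_def by blast
  define W where "W = {i\<in>{1..n}. (\<Sum>t<k. m t * g i t) \<noteq> 0}"
  let ?weights = "{card {i\<in>{1..n}. (\<Sum>t<k. m t * g i t) \<noteq> 0} | m.
                   \<exists>i\<in>{1..n}. (\<Sum>t<k. m t * g i t) \<noteq> 0}"
  have "?weights \<subseteq> {..n}"
  proof
    fix w
    assume "w \<in> ?weights"
    then obtain m' where "w = card {i\<in>{1..n}. (\<Sum>t<k. m' t * g i t) \<noteq> 0}"
      by blast
    then show "w \<in> {..n}"
      using card_mono[OF finite_atLeastAtMost Collect_subset, of 1 n] by simp
  qed
  then have "min_dist n k g \<le> card W"
    unfolding min_dist_def W_def using m(1) by (intro Min_le) (auto intro: finite_subset)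
  also have "card W \<le> card ({1..n} - X)"
    using m(2) unfolding W_def by (intro card_mono) auto
  also have "\<dots> = n - card X"
    using X by (simp add: card_Diff_subset finite_subset)
  finally show ?thesis
    using card_mono[OF _ X] by simp
qed

text \<open>Fresh coordinates can be added to \<open>X\<close> and \<open>B\<close> alike until the rank reaches \<open>k - 1\<close>;
  there is room for them, since otherwise all columns would be spanned by fewer than \<open>k\<close>.\<close>

lemma min_dist_le_padded:
  assumes "gen_full_rank n k g" "spans_cols n k g B X" "card B < k"
  shows "min_dist n k g + card X + (k - 1 - card B) \<le> n"
proof -
  have X: "X \<subseteq> {1..n}"
    using assms(2) unfolding spans_cols_def by blast
  note fin = spans_cols_finite[OF assms(2)]
  have BX: "B \<inter> ({1..n} - X) = {}"
    using assms(2) unfolding spans_cols_def by blast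
  have room: "k - 1 - card B \<le> card ({1..n} - X)"
  proof (rule ccontr)
    assume "\<not> ?thesis"
    moreover have "spans_cols n k g (B \<union> ({1..n} - X)) {1..n}"
      using spans_cols_union[OF assms(2), of "{1..n} - X"] X by (simp add: Un_absorb1)
    ultimately show False
      using spans_cols_all_card[OF assms(1)] card_Un_le[of B "{1..n} - X"] assms(3) by fastforce
  qed
  then obtain Y where Y: "Y \<subseteq> {1..n} - X" "card Y = k - 1 - card B"
    by (meson obtain_subset_with_card_n)
  have "Y - X = Y"
    using Y(1) by blast
  moreover have "Y \<subseteq> {1..n}"
    using Y(1) by blast
  ultimately have "spans_cols n k g (B \<union> Y) (X \<union> Y)"
    using spans_cols_union[OF assms(2)] by metis
  moreover have "card (B \<union> Y) = card B + card Y" "card (X \<union> Y) = card X + card Y"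
    using Y(1) fin finite_subset[OF Y(1)] BX by (auto intro!: card_Un_disjoint)
  ultimately show ?thesis
    using min_dist_le_complement[OF assms(1), of "B \<union> Y" "X \<union> Y"] Y(2) assms(3) by simp
qed

definition excess_step :: "nat \<Rightarrow> nat \<Rightarrow> nat \<times> nat \<Rightarrow> nat \<times> nat \<Rightarrow> bool" where
  "excess_step r e = (\<lambda>(x, b) (x', b'). b \<le> b' \<and> b' \<le> b + r \<and> x + b' + 1 \<le> x' + b \<and>
                                        (b < b' \<longrightarrow> x + b' + e \<le> x' + b))"

lemma excess_step_mono:
  assumes "excess_step r e p p'" "r \<le> r'" "e' \<le> e"
  shows "excess_step r' e' p p'"
  using assms unfolding excess_step_def by (auto split: prod.splits)

text \<open>While the excess \<open>h\<close> gained over a start state is below \<open>c * e\<close>, the rank has grown by at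
  most \<open>r * \<lfloor>h / e\<rfloor>\<close>; so if excess steps are available as long as that bound holds, an
  excess of \<open>c * e\<close> is reached at the cost of a rank growth of at most \<open>r * c\<close>.\<close>

lemma greedy_excess_growth:
  fixes P :: "'x \<Rightarrow> 'b \<Rightarrow> bool" and len :: "'x \<Rightarrow> nat" and rk :: "'b \<Rightarrow> nat"
  assumes "1 \<le> e" "P X0 B0"
    and step: "\<And>X B h. P X B \<Longrightarrow> len X + rk B0 = len X0 + rk B + h \<Longrightarrow> h < c * e \<Longrightarrow>
                 rk B \<le> rk B0 + r * (h div e) \<Longrightarrow>
                 \<exists>X' B'. P X' B' \<and> excess_step r e (len X, rk B) (len X', rk B')"
  shows "\<exists>X B. P X B \<and> len X0 + rk B + c * e \<le> len X + rk B0 \<and> rk B \<le> rk B0 + r * c"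
proof (cases "c = 0")
  case True
  then show ?thesis
    using assms(2) by auto
next
  case False
  have "\<exists>X' B'. P X' B' \<and> len X0 + rk B' + c * e \<le> len X' + rk B0 \<and> rk B' \<le> rk B0 + r * c"
    if "P X B" "len X + rk B0 = len X0 + rk B + h" "h < c * e" "rk B \<le> rk B0 + r * (h div e)"
    for X B h
    using that
  proof (induction "c * e - h" arbitrary: X B h rule: less_induct)
    case less
    obtain X' B' where P': "P X' B'" and st: "excess_step r e (len X, rk B) (len X', rk B')"
      using step[OF less.prems] by blast
    define h' where "h' = len X' + rk B0 - (len X0 + rk B')"
    have h': "len X' + rk B0 = len X0 + rk B' + h'" "h + 1 \<le> h'"
      using st less.prems(2) unfolding h'_def excess_step_def by auto
    have "h div e < c"
      using less.prems(3) by (simp add: less_mult_imp_div_less)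
    show ?case
    proof (cases "c * e \<le> h'")
      case True
      have "r * (h div e) + r \<le> r * c"
        using \<open>h div e < c\<close> by (metis Suc_leI add.commute mult_Suc_right mult_le_mono2)
      then have "rk B' \<le> rk B0 + r * c"
        using st less.prems(4) unfolding excess_step_def by auto
      moreover have "len X0 + rk B' + c * e \<le> len X' + rk B0"
        using True h'(1) by linarith
      ultimately show ?thesis
        using P' by blast
    next
      case False
      have "rk B' \<le> rk B0 + r * (h' div e)"
      proof (cases "rk B < rk B'")
        case True
        then have "h + e \<le> h'"
          using st less.prems(2) h'(1) unfolding excess_step_def by auto
        then have "h div e + 1 \<le> h' div e"
          using div_le_mono[of "h + e" h' e] \<open>1 \<le> e\<close> by simp
        then have "r * (h div e) + r \<le> r * (h' div e)"
          by (metis add_mult_distrib2 mult.right_neutral mult_le_mono2)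
        then show ?thesis
          using st less.prems(4) unfolding excess_step_def by auto
      next
        case False
        then have "rk B' = rk B"
          using st unfolding excess_step_def by auto
        moreover have "r * (h div e) \<le> r * (h' div e)"
          using h'(2) by (simp add: div_le_mono)
        ultimately show ?thesis
          using less.prems(4) by linarith
      qed
      moreover have "c * e - h' < c * e - h"
        using h'(2) False by linarith
      ultimately show ?thesis
        using less.hyps[OF _ P' h'(1)] False by simp
    qed
  qed
  from this[OF assms(2), of 0] False show ?thesis
    using \<open>1 \<le> e\<close> by simp
qed

definition recovers_erasures :: "nat \<Rightarrow> (nat \<Rightarrow> nat \<Rightarrow> 'a::field) \<Rightarrow> nat \<Rightarrow> nat set \<Rightarrow> bool" where
  "recovers_erasures k g e S \<longleftrightarrow>
     (\<forall>E. E \<subseteq> S \<longrightarrow> card E = e \<longrightarrow> (\<forall>j\<in>E. in_col_span k g (S - E) j))"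

lemma spans_cols_add_repair_group:
  assumes "spans_cols n k g B X" "S \<subseteq> {1..n}" "E \<subseteq> S" "card E = e" "recovers_erasures k g e S"
  shows "spans_cols n k g (B \<union> (S - E - X)) (X \<union> S)"
proof -
  have XS: "spans_cols n k g (B \<union> (S - E - X)) (X \<union> (S - E))"
    using spans_cols_union[OF assms(1)] assms(2) by blast
  have fin: "finite (X \<union> (S - E))"
    using spans_cols_finite(1)[OF XS] .
  have "\<forall>j\<in>E. in_col_span k g (X \<union> (S - E)) j"
    using assms(3-5) fin in_col_span_mono[of k g "S - E" _ "X \<union> (S - E)"]
    unfolding recovers_erasures_def by blast
  then have "spans_cols n k g (B \<union> (S - E - X)) (X \<union> (S - E) \<union> E)"
    using spans_cols_adjoin[OF XS] assms(2,3) by blast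
  moreover have "X \<union> (S - E) \<union> E = X \<union> S"
    using assms(3) by blast
  ultimately show ?thesis
    by simp
qed

text \<open>Adding a repair group \<open>S\<close> that meets the complement of \<open>X\<close>: if \<open>S\<close> has at least \<open>e\<close> new
  coordinates, erase \<open>e\<close> of them and keep the others in the spanning set; otherwise erase all new
  coordinates (and a few old ones) and keep the spanning set.\<close>

lemma spans_cols_excess_step:
  assumes span: "spans_cols n k g B X"
    and S: "S \<subseteq> {1..n}" "\<iota> \<in> S" "\<iota> \<notin> X" "e \<le> card S" "card S \<le> r + e" "1 \<le> e"
    and rec: "recovers_erasures k g e S"
  shows "\<exists>B'. spans_cols n k g B' (X \<union> S) \<and> excess_step r e (card X, card B) (card (X \<union> S), card B')"
proof -
  note fin = spans_cols_finite[OF span]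
  have finS: "finite S"
    using S(1) finite_subset by blast
  define A where "A = S - X"
  have A: "finite A" "card A \<le> card S"
    using finS unfolding A_def by (auto intro: card_mono)
  have A_ne: "1 \<le> card A"
    using A(1) S(2,3) unfolding A_def by (auto simp: Suc_le_eq card_gt_0_iff)
  have card_XS: "card (X \<union> S) = card X + card A"
    unfolding A_def using fin(1) finS by (metis Un_Diff_cancel card_Un_disjoint Diff_disjoint finite_Diff)
  have card_B': "card (B \<union> (A - E)) = card B + card (A - E)" for E
  proof -
    have "B \<inter> (A - E) = {}"
      using span unfolding A_def spans_cols_def by blast
    then show ?thesis
      using fin(2) A(1) by (simp add: card_Un_disjoint)
  qed
  show ?thesis
  proof (cases "e \<le> card A")
    case True
    then obtain E where E: "E \<subseteq> A" "card E = e"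
      using obtain_subset_with_card_n by metis
    have "spans_cols n k g (B \<union> (A - E)) (X \<union> S)"
      using spans_cols_add_repair_group[OF span S(1) _ E(2) rec] E(1)
      unfolding A_def by (simp add: Diff_eq Int_commute Int_left_commute)
    moreover have "card (A - E) = card A - e"
      using E A(1) by (simp add: card_Diff_subset finite_subset)
    ultimately show ?thesis
      using True A(2) S(5,6) card_XS card_B'[of E] unfolding excess_step_def
      by (intro exI[of _ "B \<union> (A - E)"]) auto
  next
    case False
    have "card S = card A + card (S \<inter> X)"
      unfolding A_def using finS by (metis Int_Diff_disjoint Un_Diff_Int card_Un_disjoint finite_Diff finite_Int inf_commute)
    then have "e - card A \<le> card (S \<inter> X)"
      using S(4) by linarith
    then obtain F where F: "F \<subseteq> S \<inter> X" "card F = e - card A"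
      by (meson obtain_subset_with_card_n)
    have "A \<inter> F = {}"
      using F(1) unfolding A_def by blast
    then have "card (A \<union> F) = e"
      using A(1) F False finite_subset[OF F(1)] finS by (simp add: card_Un_disjoint)
    moreover have "A \<union> F \<subseteq> S"
      using F(1) unfolding A_def by blast
    ultimately have "spans_cols n k g (B \<union> (S - (A \<union> F) - X)) (X \<union> S)"
      using spans_cols_add_repair_group[OF span S(1) _ _ rec] by blast
    moreover have "S - (A \<union> F) - X = {}"
      unfolding A_def by blast
    ultimately show ?thesis
      using card_XS A_ne unfolding excess_step_def by (intro exI[of _ B]) auto
  qed
qed

lemma Delta_diff:
  "1 \<le> j \<Longrightarrow> Delta T r \<delta> j - Delta T r \<delta> (j - 1) =
     \<lceil>real (card (T j)) / real (r j + \<delta> j - 1)\<rceil> * (int (\<delta> j) - 1)"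
  by (cases j) (simp_all add: Delta_def)

lemma mult_le_of_ceiling_bound:
  fixes c e r t :: nat
  assumes "1 \<le> e"
    and "int r * \<lceil>real_of_int (int (c * e) - 1) / real e\<rceil> + (int (c * e) - 1) < int t"
  shows "c * e + r * (c - 1) \<le> t"
proof (cases "c = 0")
  case False
  have "real (c - 1) * real e \<le> real_of_int (int (c * e) - 1)"
    using False assms(1) by (simp add: of_nat_diff algebra_simps)
  then have "real (c - 1) \<le> real_of_int (int (c * e) - 1) / real e"
    using assms(1) by (simp add: pos_le_divide_eq)
  then have "int (c - 1) \<le> \<lceil>real_of_int (int (c * e) - 1) / real e\<rceil>"
    by (metis ceiling_mono ceiling_of_nat)
  then have "int (r * (c - 1)) \<le> int r * \<lceil>real_of_int (int (c * e) - 1) / real e\<rceil>"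
    by (simp add: mult_left_mono)
  then show ?thesis
    using assms(2) by linarith
qed simp

lemma mult_ceiling_divide_minus_one_less:
  fixes a b :: nat
  assumes "0 < a"
  shows "b * nat (\<lceil>real a / real b\<rceil> - 1) < a"
proof (cases "b = 0 \<or> \<lceil>real a / real b\<rceil> \<le> 1")
  case False
  then have "real (nat (\<lceil>real a / real b\<rceil> - 1)) < real a / real b"
    by (simp add: ceiling_less_iff[symmetric]) linarith
  then have "real (b * nat (\<lceil>real a / real b\<rceil> - 1)) < real a"
    using False by (simp add: pos_less_divide_eq mult.commute)
  then show ?thesis
    by (simp only: of_nat_less_iff)
qed (use assms in auto)

locale code_with_localities =
  fixes n k :: nat and g :: "nat \<Rightarrow> nat \<Rightarrow> 'a::field"
    and s :: nat and T :: "nat \<Rightarrow> nat set" and r \<delta> :: "nat \<Rightarrow> nat"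
  assumes full_rank: "gen_full_rank n k g"
    and localities: "multiple_localities n k g s T r \<delta>"
begin

lemma partition: "is_partition n s T"
  using localities unfolding multiple_localities_def by (rule conjunct1)

lemma parameters_ordered: "1 \<le> i \<Longrightarrow> i \<le> j \<Longrightarrow> j \<le> s \<Longrightarrow> r i \<le> r j \<and> \<delta> j \<le> \<delta> i"
  using localities unfolding multiple_localities_def by (elim conjE) blast

lemma two_le_\<delta>_last: "2 \<le> \<delta> s"
  using localities unfolding multiple_localities_def by (elim conjE)

lemma local_repair_sets:
  assumes "i \<in> {1..s}" "\<iota> \<in> T i"
  shows "\<exists>S. S \<subseteq> T i \<and> \<iota> \<in> S \<and> \<delta> i \<le> card S \<and> card S \<le> r i + \<delta> i - 1 \<and>
           (\<forall>E. E \<subseteq> S \<longrightarrow> card E = \<delta> i - 1 \<longrightarrow> (\<forall>j\<in>E. regenerating n k g j ((S - E) \<union> {j})))"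
  using localities assms unfolding multiple_localities_def by (elim conjE) blast

lemma block_subset: "i \<in> {1..s} \<Longrightarrow> T i \<subseteq> {1..n}"
  using partition unfolding is_partition_def by blast

lemma blocks_disjoint: "i \<in> {1..s} \<Longrightarrow> j \<in> {1..s} \<Longrightarrow> i \<noteq> j \<Longrightarrow> T i \<inter> T j = {}"
  using partition unfolding is_partition_def by blast

lemma in_some_block: "x \<in> {1..n} \<Longrightarrow> \<exists>i\<in>{1..s}. x \<in> T i"
  using partition unfolding is_partition_def by blast

lemma r_le_last: "i \<in> {1..s} \<Longrightarrow> r i \<le> r s"
  using parameters_ordered by simp

lemma \<delta>_last_le: "i \<in> {1..s} \<Longrightarrow> \<delta> s \<le> \<delta> i"
  using parameters_ordered by simp

lemma two_le_\<delta>: "i \<in> {1..s} \<Longrightarrow> 2 \<le> \<delta> i"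
  using \<delta>_last_le two_le_\<delta>_last by fastforce

lemma exists_repair_group:
  assumes "i \<in> {1..s}" "\<iota> \<in> T i"
  obtains S where "S \<subseteq> T i" "\<iota> \<in> S" "\<delta> i - 1 \<le> card S" "card S \<le> r i + (\<delta> i - 1)"
    "recovers_erasures k g (\<delta> i - 1) S"
proof -
  obtain S where S: "S \<subseteq> T i" "\<iota> \<in> S" "\<delta> i \<le> card S" "card S \<le> r i + \<delta> i - 1"
      and reg: "\<forall>E. E \<subseteq> S \<longrightarrow> card E = \<delta> i - 1 \<longrightarrow> (\<forall>j\<in>E. regenerating n k g j ((S - E) \<union> {j}))"
    using local_repair_sets[OF assms] by blast
  have "in_col_span k g (S - E) j" if "E \<subseteq> S" "card E = \<delta> i - 1" "j \<in> E" for E j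
  proof -
    have "in_col_span k g ((S - E) \<union> {j} - {j}) j"
      using reg that unfolding regenerating_def by blast
    moreover have "(S - E) \<union> {j} - {j} = S - E"
      using \<open>j \<in> E\<close> by blast
    ultimately show ?thesis
      by simp
  qed
  then have "recovers_erasures k g (\<delta> i - 1) S"
    unfolding recovers_erasures_def by blast
  moreover have "\<delta> i - 1 \<le> card S" "card S \<le> r i + (\<delta> i - 1)"
    using S(3,4) two_le_\<delta>[OF assms(1)] by linarith+
  ultimately show thesis
    using that S(1,2) by blast
qed

lemma extend_within_block:
  assumes "spans_cols n k g B X" "i \<in> {1..s}" "\<iota> \<in> T i" "\<iota> \<notin> X"
  obtains X' B' where "spans_cols n k g B' X'" "X \<subseteq> X'" "X' \<subseteq> X \<union> T i"
    "excess_step (r i) (\<delta> i - 1) (card X, card B) (card X', card B')"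
proof -
  obtain S where S: "S \<subseteq> T i" "\<iota> \<in> S" "\<delta> i - 1 \<le> card S" "card S \<le> r i + (\<delta> i - 1)"
      "recovers_erasures k g (\<delta> i - 1) S"
    using exists_repair_group[OF assms(2,3)] .
  have "S \<subseteq> {1..n}" "1 \<le> \<delta> i - 1"
    using S(1) block_subset[OF assms(2)] two_le_\<delta>[OF assms(2)] by auto
  then obtain B' where "spans_cols n k g B' (X \<union> S)"
      "excess_step (r i) (\<delta> i - 1) (card X, card B) (card (X \<union> S), card B')"
    using spans_cols_excess_step[OF assms(1) _ S(2) assms(4) S(3,4) _ S(5)] by blast
  then show thesis
    using that S(1) by blast
qed

lemma block_stage:
  assumes "spans_cols n k g B0 X0" "j \<in> {1..s}" "X0 \<inter> T j = {}"
    and room: "c * (\<delta> j - 1) + r j * (c - 1) \<le> card (T j)"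
  shows "\<exists>X B. spans_cols n k g B X \<and> X0 \<subseteq> X \<and> X \<subseteq> X0 \<union> T j \<and>
           card X0 + card B + c * (\<delta> j - 1) \<le> card X + card B0 \<and> card B \<le> card B0 + r j * c"
proof -
  let ?e = "\<delta> j - 1"
  let ?P = "\<lambda>X B. spans_cols n k g B X \<and> X0 \<subseteq> X \<and> X \<subseteq> X0 \<union> T j"
  have "\<exists>X B. ?P X B \<and> card X0 + card B + c * ?e \<le> card X + card B0 \<and> card B \<le> card B0 + r j * c"
  proof (rule greedy_excess_growth)
    show "1 \<le> ?e"
      using two_le_\<delta>[OF assms(2)] by simp
    show "?P X0 B0"
      using assms(1) by blast
    fix X B h
    assume P: "?P X B" and h: "card X + card B0 = card X0 + card B + h" "h < c * ?e"
      and rank: "card B \<le> card B0 + r j * (h div ?e)"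
    have "h div ?e \<le> c - 1"
      using h(2) less_mult_imp_div_less by fastforce
    then have "r j * (h div ?e) \<le> r j * (c - 1)"
      by simp
    moreover have "card (X - X0) = card X - card X0"
      using P spans_cols_finite(1) by (metis card_Diff_subset finite_subset)
    ultimately have "card (X - X0) < card (T j)"
      using h rank room by linarith
    moreover have "finite X"
      using P spans_cols_finite(1) by blast
    ultimately obtain \<iota> where "\<iota> \<in> T j" "\<iota> \<notin> X"
      using assms(3) card_mono[of "X - X0" "T j"] by (metis Diff_iff Int_iff empty_iff finite_Diff not_le subsetI)
    with P obtain X' B' where X': "spans_cols n k g B' X'" "X \<subseteq> X'" "X' \<subseteq> X \<union> T j"
        and step: "excess_step (r j) ?e (card X, card B) (card X', card B')"
      by (metis extend_within_block[OF _ assms(2)])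
    have "?P X' B'"
      using P X' by blast
    with step show "\<exists>X' B'. ?P X' B' \<and> excess_step (r j) ?e (card X, card B) (card X', card B')"
      by blast
  qed
  then show ?thesis
    by blast
qed

lemma first_blocks:
  assumes "j \<le> s" "\<forall>i\<in>{1..j}. c i * (\<delta> i - 1) + r i * (c i - 1) \<le> card (T i)"
  shows "\<exists>X B. spans_cols n k g B X \<and> X \<subseteq> (\<Union>i\<in>{1..j}. T i) \<and> card B \<le> (\<Sum>i=1..j. r i * c i) \<and>
           (\<Sum>i=1..j. c i * (\<delta> i - 1)) + card B \<le> card X"
  using assms
proof (induction j)
  case 0
  then show ?case
    using spans_cols_empty by fastforce
next
  case (Suc j)
  obtain X0 B0 where X0: "spans_cols n k g B0 X0" "X0 \<subseteq> (\<Union>i\<in>{1..j}. T i)"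
      "card B0 \<le> (\<Sum>i=1..j. r i * c i)" "(\<Sum>i=1..j. c i * (\<delta> i - 1)) + card B0 \<le> card X0"
    using Suc by auto
  have j: "Suc j \<in> {1..s}"
    using Suc.prems(1) by simp
  have "X0 \<inter> T (Suc j) = {}"
    using X0(2) blocks_disjoint[OF _ j] Suc.prems(1) by fastforce
  moreover have "c (Suc j) * (\<delta> (Suc j) - 1) + r (Suc j) * (c (Suc j) - 1) \<le> card (T (Suc j))"
    using Suc.prems(2) by simp
  ultimately obtain X B where X: "spans_cols n k g B X" "X \<subseteq> X0 \<union> T (Suc j)"
      "card X0 + card B + c (Suc j) * (\<delta> (Suc j) - 1) \<le> card X + card B0"
      "card B \<le> card B0 + r (Suc j) * c (Suc j)"
    using block_stage[OF X0(1) j] by blast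
  have "X \<subseteq> (\<Union>i\<in>{1..Suc j}. T i)"
    using X(2) X0(2) by fastforce
  with X X0 show ?case
    by (intro exI[of _ X] exI[of _ B]) auto
qed

lemma final_stage:
  assumes "spans_cols n k g B0 X0" "card B0 + r s * c < k"
  shows "\<exists>X B. spans_cols n k g B X \<and> card X0 + card B + c * (\<delta> s - 1) \<le> card X + card B0 \<and>
           card B \<le> card B0 + r s * c"
proof (rule greedy_excess_growth)
  show "1 \<le> \<delta> s - 1"
    using two_le_\<delta>_last by simp
  show "spans_cols n k g B0 X0"
    by fact
  fix X B h
  assume span: "spans_cols n k g B X" and h: "h < c * (\<delta> s - 1)"
    and rank: "card B \<le> card B0 + r s * (h div (\<delta> s - 1))"
  have "h div (\<delta> s - 1) \<le> c"
    using h less_mult_imp_div_less by fastforce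
  then have "card B < k"
    using rank assms(2) mult_le_mono2[of "h div (\<delta> s - 1)" c "r s"] by linarith
  then have "X \<noteq> {1..n}"
    using spans_cols_all_card[OF full_rank] span by fastforce
  moreover have "X \<subseteq> {1..n}"
    using span unfolding spans_cols_def by blast
  ultimately obtain \<iota> i where \<iota>: "\<iota> \<notin> X" "i \<in> {1..s}" "\<iota> \<in> T i"
    using in_some_block by blast
  then obtain X' B' where "spans_cols n k g B' X'"
      "excess_step (r i) (\<delta> i - 1) (card X, card B) (card X', card B')"
    using extend_within_block[OF span] by metis
  moreover have "r i \<le> r s" "\<delta> s - 1 \<le> \<delta> i - 1"
    using r_le_last \<delta>_last_le \<iota>(2) diff_le_mono by blast+
  ultimately show "\<exists>X' B'. spans_cols n k g B' X' \<and>
                     excess_step (r s) (\<delta> s - 1) (card X, card B) (card X', card B')"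
    using excess_step_mono by blast
qed

lemma min_dist_bound:
  assumes "\<forall>i\<in>{1..s - 1}. c i * (\<delta> i - 1) + r i * (c i - 1) \<le> card (T i)"
    and "(\<Sum>i=1..s - 1. r i * c i) + r s * M < k"
  shows "min_dist n k g + (\<Sum>i=1..s - 1. c i * (\<delta> i - 1)) + M * (\<delta> s - 1) + k \<le> n + 1"
proof -
  obtain X0 B0 where X0: "spans_cols n k g B0 X0" "card B0 \<le> (\<Sum>i=1..s - 1. r i * c i)"
      "(\<Sum>i=1..s - 1. c i * (\<delta> i - 1)) + card B0 \<le> card X0"
    using first_blocks[of "s - 1" c] assms(1) by auto
  obtain X B where X: "spans_cols n k g B X" "card X0 + card B + M * (\<delta> s - 1) \<le> card X + card B0"
      "card B \<le> card B0 + r s * M"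
    using final_stage[OF X0(1), of M] X0(2) assms(2) by auto
  have "card B < k"
    using X(3) X0(2) assms(2) by linarith
  then have "min_dist n k g + card X + (k - 1 - card B) \<le> n"
    using min_dist_le_padded[OF full_rank X(1)] by blast
  then show ?thesis
    using X(2) X0(3) \<open>card B < k\<close> by linarith
qed

definition groups :: "nat \<Rightarrow> nat" where
  "groups i = nat \<lceil>real (card (T i)) / real (r i + \<delta> i - 1)\<rceil>"

lemma ceiling_groups: "\<lceil>real (card (T i)) / real (r i + \<delta> i - 1)\<rceil> = int (groups i)"
proof -
  have "0 \<le> \<lceil>real (card (T i)) / real (r i + \<delta> i - 1)\<rceil>"
    by (metis ceiling_mono ceiling_zero divide_nonneg_nonneg of_nat_0_le_iff)
  then show ?thesis
    unfolding groups_def by simp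
qed

lemma ceiling_groups_excess:
  assumes "i \<in> {1..s}"
  shows "\<lceil>real (card (T i)) / real (r i + \<delta> i - 1)\<rceil> * (int (\<delta> i) - 1) = int (groups i * (\<delta> i - 1))"
proof -
  have "int (\<delta> i) - 1 = int (\<delta> i - 1)"
    using two_le_\<delta>[OF assms] by simp
  then show ?thesis
    unfolding ceiling_groups by (simp only: of_nat_mult)
qed

lemma block_rooms:
  assumes "\<forall>j\<in>{1..s-1}.
             int (r j) * \<lceil>real_of_int (Delta T r \<delta> j - Delta T r \<delta> (j-1) - 1) / real (\<delta> j - 1)\<rceil>
               + (Delta T r \<delta> j - Delta T r \<delta> (j-1) - 1) < int (card (T j))"
  shows "\<forall>i\<in>{1..s - 1}. groups i * (\<delta> i - 1) + r i * (groups i - 1) \<le> card (T i)"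
proof
  fix i
  assume i: "i \<in> {1..s - 1}"
  then have i': "i \<in> {1..s}"
    by auto
  then have "Delta T r \<delta> i - Delta T r \<delta> (i - 1) = int (groups i * (\<delta> i - 1))"
    using Delta_diff[of i T r \<delta>] ceiling_groups_excess by simp
  with bspec[OF assms i]
  have "int (r i) * \<lceil>real_of_int (int (groups i * (\<delta> i - 1)) - 1) / real (\<delta> i - 1)\<rceil>
          + (int (groups i * (\<delta> i - 1)) - 1) < int (card (T i))"
    by metis
  then show "groups i * (\<delta> i - 1) + r i * (groups i - 1) \<le> card (T i)"
    by (rule mult_le_of_ceiling_bound[rotated]) (use two_le_\<delta>[OF i'] in simp)
qed

lemma sum_ceiling_excess:
  "(\<Sum>i=1..s-1. \<lceil>real (card (T i)) / real (r i + \<delta> i - 1)\<rceil> * (int (\<delta> i) - 1)) =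
     int (\<Sum>i=1..s - 1. groups i * (\<delta> i - 1))"
  unfolding of_nat_sum
proof (rule sum.cong[OF refl])
  fix i
  assume "i \<in> {1..s - 1}"
  then have "i \<in> {1..s}"
    by auto
  then show "\<lceil>real (card (T i)) / real (r i + \<delta> i - 1)\<rceil> * (int (\<delta> i) - 1) = int (groups i * (\<delta> i - 1))"
    by (rule ceiling_groups_excess)
qed

end

theorem theorem2:
  fixes g :: "nat \<Rightarrow> nat \<Rightarrow> 'a::{field,finite}"
    and n k s :: nat and T :: "nat \<Rightarrow> nat set" and r \<delta> :: "nat \<Rightarrow> nat"
  assumes "s \<ge> 2"
    and "gen_full_rank n k g"
    and "multiple_localities n k g s T r \<delta>"
    and "(\<Sum>i=1..s-1. int (r i) * \<lceil>real (card (T i)) / real (r i + \<delta> i - 1)\<rceil>) \<le> int k - 1"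
    and "\<forall>j\<in>{1..s-1}.
           int (r j) * \<lceil>real_of_int (Delta T r \<delta> j - Delta T r \<delta> (j-1) - 1) / real (\<delta> j - 1)\<rceil>
             + (Delta T r \<delta> j - Delta T r \<delta> (j-1) - 1) < int (card (T j))"
  shows "int (min_dist n k g) \<le> int n - int k + 1
           - (\<Sum>i=1..s-1. \<lceil>real (card (T i)) / real (r i + \<delta> i - 1)\<rceil> * (int (\<delta> i) - 1))
           - (\<lceil>real_of_int (int k - (\<Sum>i=1..s-1. int (r i) * \<lceil>real (card (T i)) / real (r i + \<delta> i - 1)\<rceil>))
                 / real (r s)\<rceil> - 1) * (int (\<delta> s) - 1)"
proof -
  interpret code_with_localities n k g s T r \<delta>
    using assms(2,3) by unfold_locales
  define R where "R = (\<Sum>i=1..s - 1. r i * groups i)"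
  define M where "M = nat (\<lceil>real (k - R) / real (r s)\<rceil> - 1)"
  have R: "int R = (\<Sum>i=1..s-1. int (r i) * \<lceil>real (card (T i)) / real (r i + \<delta> i - 1)\<rceil>)"
    unfolding R_def ceiling_groups by simp
  then have "R < k"
    using assms(4) by linarith
  then have "R + r s * M < k"
    using mult_ceiling_divide_minus_one_less[of "k - R" "r s"] unfolding M_def by linarith
  with block_rooms[OF assms(5)]
  have bound: "min_dist n k g + (\<Sum>i=1..s - 1. groups i * (\<delta> i - 1)) + M * (\<delta> s - 1) + k \<le> n + 1"
    using min_dist_bound unfolding R_def by blast
  have k_minus_R: "real_of_int (int k - int R) = real (k - R)"
    using \<open>R < k\<close> by simp
  have "(\<lceil>real (k - R) / real (r s)\<rceil> - 1) * (int (\<delta> s) - 1) \<le> int (M * (\<delta> s - 1))"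
    using two_le_\<delta>_last unfolding M_def by (simp add: mult_right_mono_neg)
  then show ?thesis
    using bound unfolding R[symmetric] sum_ceiling_excess k_minus_R by linarith
qed

end
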